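(* Let $p$ be a prime and $M$, $N$ integers with $p^2>N\ge1$. The linear complexity $L_p(M;N)$ of the sequence $q_p(u)$, $u=M+1,\ldots,M+N$ (viewed as elements of $\mathbb{F}_p$), satisfies $$L_p(M;N)\ge\min\Big\{\frac{p-1}{2},\,\frac{N-p-1}{3}\Big\}.$$
   Context: For a prime $p$ and an integer $u$ with $\gcd(u,p)=1$, the Fermat quotient $q_p(u)$ is the unique integer with $q_p(u)\equiv (u^{p-1}-1)/p \pmod p$ and $0\le q_p(u)\le p-1$; also $q_p(kp)=0$ for all $k\in\mathbb{Z}$. The linear complexity of an $N$-element sequence $s_0,\ldots,s_{N-1}$ in a ring $\mathcal{R}$ is the smallest $L$ such that $s_{u+L}=c_{L-1}s_{u+L-1}+\cdots+c_0s_u$ for all $0\le u\le N-L-1$, for some $c_0,\ldots,c_{L-1}\in\mathcal{R}$. *)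

theory Defs
  imports "HOL-Number_Theory.Number_Theory"
begin

definition fermat_quotient :: "int \<Rightarrow> int \<Rightarrow> int" where
  "fermat_quotient p u =
     (if p dvd u then 0 else ((u ^ nat (p - 1) - 1) div p) mod p)"

text \<open>Linear complexity over F_p (elements represented by integers modulo p)
  of the N-element sequence s 0, ..., s (N-1): the least L such that there are
  coefficients c 0, ..., c (L-1) in F_p with
  s (u+L) = c (L-1) s (u+L-1) + ... + c 0 s u  for all 0 <= u <= N-L-1.\<close>
definition lin_compl_mod :: "int \<Rightarrow> nat \<Rightarrow> (nat \<Rightarrow> int) \<Rightarrow> nat" where
  "lin_compl_mod p N s =
     (LEAST L. \<exists>c :: nat \<Rightarrow> int. \<forall>u. u + L < N \<longrightarrow>
        [s (u + L) = (\<Sum>i<L. c i * s (u + i))] (mod p))"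

end

theory Submission
  imports Defs "HOL-Computational_Algebra.Polynomial"
begin

text \<open>
  Replacing \<open>u\<close> by \<open>u + p\<close> changes the Fermat quotient by \<open>-u\<^sup>p\<^sup>-\<^sup>2 \<equiv> -1/u (mod p)\<close>.
  Subtracting a linear recurrence of order \<open>L < p\<close> at \<open>x\<close> from the same recurrence at \<open>x + p\<close>
  therefore gives \<open>\<Sum>i\<le>L. d\<^sub>i / (x + i) \<equiv> 0 (mod p)\<close>: after clearing denominators, \<open>x\<close> is a root
  mod \<open>p\<close> of a polynomial of degree at most \<open>L\<close> that does not vanish mod \<open>p\<close>. In a window of
  \<open>min (N - p - L) p\<close> consecutive integers, pairwise distinct mod \<open>p\<close>, all but at most \<open>L + 1\<close>
  of them keep \<open>x, \<dots>, x + L\<close> prime to \<open>p\<close>, so the window has length at most \<open>2L + 1\<close>.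
\<close>

lemma fermat_theorem_int:
  fixes p a :: int
  assumes "prime p" and "\<not> p dvd a"
  shows "[a ^ nat (p - 1) = 1] (mod p)"
proof -
  interpret residues p "residue_ring p"
    using prime_gt_1_int[OF assms(1)] by unfold_locales simp_all
  have "coprime a p"
    using assms prime_imp_coprime[of p a] by (simp add: ac_simps)
  moreover have "totient (nat p) = nat (p - 1)"
    using totient_prime[of "nat p"] assms(1) by (simp add: nat_diff_distrib)
  ultimately show ?thesis by (metis euler_theorem)
qed

lemma power_Suc_add_first_order:
  fixes a b :: "'a :: comm_ring_1"
  shows "b\<^sup>2 dvd (a + b) ^ Suc n - (a ^ Suc n + of_nat (Suc n) * a ^ n * b)"
proof (induction n)
  case 0
  show ?case by simp
next
  case (Suc n)
  then obtain r where r: "(a + b) ^ Suc n = a ^ Suc n + of_nat (Suc n) * a ^ n * b + b\<^sup>2 * r"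
    by (auto simp: dvd_def algebra_simps)
  have "(a + b) ^ Suc (Suc n) - (a ^ Suc (Suc n) + of_nat (Suc (Suc n)) * a ^ Suc n * b)
      = b\<^sup>2 * (of_nat (Suc n) * a ^ n + r * (a + b))"
    unfolding power_Suc2[of "a + b" "Suc n"] r by (simp add: algebra_simps power2_eq_square)
  then show ?case by simp
qed

lemma fermat_quotient_cong:
  fixes p v :: int
  assumes "prime p" and "\<not> p dvd v"
  shows "[p * fermat_quotient p v = v ^ nat (p - 1) - 1] (mod p\<^sup>2)"
proof -
  define t where "t = (v ^ nat (p - 1) - 1) div p"
  have "p dvd v ^ nat (p - 1) - 1"
    using fermat_theorem_int[OF assms] by (simp add: cong_iff_dvd_diff)
  then have "p * t = v ^ nat (p - 1) - 1" unfolding t_def by simp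
  moreover have "[p * (t mod p) = p * t] (mod p\<^sup>2)"
    unfolding power2_eq_square by (intro cong_cmult_leftI) (simp add: cong_def)
  ultimately show ?thesis using assms(2) unfolding fermat_quotient_def t_def by simp
qed

lemma fermat_quotient_add_prime:
  fixes p v :: int
  assumes "prime p" and "\<not> p dvd v"
  shows "[fermat_quotient p (v + p) = fermat_quotient p v - v ^ nat (p - 2)] (mod p)"
proof -
  have p2: "p \<ge> 2" using assms(1) prime_ge_2_int by blast
  have exp: "nat (p - 1) = Suc (nat (p - 2))" and "int (Suc (nat (p - 2))) = p - 1"
    using p2 by simp_all
  define e where "e = v ^ nat (p - 2)"
  have "\<not> p dvd v + p" using assms(2) by (simp add: dvd_add_left_iff)
  then have "[p * fermat_quotient p (v + p) = (v + p) ^ nat (p - 1) - 1] (mod p\<^sup>2)"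
    by (rule fermat_quotient_cong[OF assms(1)])
  moreover have "[(v + p) ^ nat (p - 1) - 1 = (v ^ nat (p - 1) - 1) + (p - 1) * e * p] (mod p\<^sup>2)"
    using power_Suc_add_first_order[of p v "nat (p - 2)"] unfolding exp \<open>int _ = _\<close> e_def
    by (simp add: cong_iff_dvd_diff algebra_simps)
  moreover have "[(v ^ nat (p - 1) - 1) + (p - 1) * e * p = p * fermat_quotient p v + (p - 1) * e * p] (mod p\<^sup>2)"
    using fermat_quotient_cong[OF assms] by (intro cong_add cong_refl) (rule cong_sym)
  ultimately have "[p * fermat_quotient p (v + p) = p * fermat_quotient p v + (p - 1) * e * p] (mod p\<^sup>2)"
    by (metis cong_trans)
  then have "p * p dvd p * (fermat_quotient p (v + p) - (fermat_quotient p v - e)) - p\<^sup>2 * e"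
    by (simp add: cong_iff_dvd_diff power2_eq_square algebra_simps)
  then have "p * p dvd p * (fermat_quotient p (v + p) - (fermat_quotient p v - e))"
    by (metis dvd_add dvd_triv_left diff_add_cancel power2_eq_square)
  then show ?thesis using p2 unfolding e_def by (simp add: cong_iff_dvd_diff)
qed

lemma dvd_coeff_mult_if_dvd_coeffs:
  fixes c :: "'a :: comm_semiring_1"
  assumes "\<And>k. c dvd coeff G k"
  shows "c dvd coeff (H * G) k"
  unfolding coeff_mult using assms by (intro dvd_sum dvd_mult)

lemma card_roots_mod_prime_le_degree:
  fixes p :: int and F :: "int poly"
  assumes "prime p" and "\<exists>k. \<not> p dvd coeff F k"
    and "finite S" and "inj_on (\<lambda>x. x mod p) S" and "\<And>x. x \<in> S \<Longrightarrow> p dvd poly F x"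
  shows "card S \<le> degree F"
  using assms(2-)
proof (induction "degree F" arbitrary: F S rule: less_induct)
  case less
  show ?case
  proof (cases "S = {}")
    case False
    then obtain a where a: "a \<in> S" by blast
    define G where "G = synthetic_div F a"
    have F: "F = [:-a, 1:] * G + [:poly F a:]"
      using synthetic_div_correct'[of a F] by (simp add: G_def)
    have "p dvd poly F a" using less.prems(4) a .
    have G_nonzero_mod: "\<exists>k. \<not> p dvd coeff G k"
    proof (rule ccontr)
      assume "\<nexists>k. \<not> p dvd coeff G k"
      then have "p dvd coeff ([:-a, 1:] * G + [:poly F a:]) k" for k
        using dvd_coeff_mult_if_dvd_coeffs[of p G "[:-a, 1:]" k] \<open>p dvd poly F a\<close>
        by (cases k) auto
      then show False using less.prems(1) F by metis
    qed
    then have "G \<noteq> 0" by auto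
    then have deg: "degree G < degree F"
      unfolding G_def degree_synthetic_div by (simp add: synthetic_div_eq_0_iff)
    have roots_G: "p dvd poly G b" if b: "b \<in> S - {a}" for b
    proof -
      have "poly F b = (b - a) * poly G b + poly F a"
        by (subst F) (simp add: algebra_simps)
      then have "p dvd (b - a) * poly G b"
        using less.prems(4) b \<open>p dvd poly F a\<close> by (metis DiffD1 add_diff_cancel_right' dvd_diff)
      moreover have "\<not> p dvd b - a"
        using less.prems(3) a b by (auto simp: mod_eq_dvd_iff[symmetric] dest: inj_onD)
      ultimately show ?thesis using assms(1) prime_dvd_mult_iff by blast
    qed
    have "card (S - {a}) \<le> degree G"
      by (rule less.hyps[OF deg G_nonzero_mod]) (use less.prems(2,3) roots_G in \<open>auto intro: inj_on_subset\<close>)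
    then show ?thesis using deg a less.prems(2) by (simp add: card_Diff_singleton)
  qed simp
qed

text \<open>The numerator of \<open>\<Sum>i\<le>L. d i / (X + i)\<close> over the common denominator \<open>\<Prod>j\<le>L. (X + j)\<close>.\<close>
definition partial_fraction_numerator :: "nat \<Rightarrow> (nat \<Rightarrow> int) \<Rightarrow> int poly" where
  "partial_fraction_numerator L d = (\<Sum>i\<le>L. smult (d i) (\<Prod>j\<in>{..L} - {i}. [:int j, 1:]))"

lemma poly_partial_fraction_numerator:
  "poly (partial_fraction_numerator L d) x = (\<Sum>i\<le>L. d i * (\<Prod>j\<in>{..L} - {i}. x + int j))"
  unfolding partial_fraction_numerator_def by (simp add: poly_sum poly_prod add.commute)

lemma degree_partial_fraction_numerator_le: "degree (partial_fraction_numerator L d) \<le> L"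
  unfolding partial_fraction_numerator_def
proof (intro degree_sum_le)
  fix i assume "i \<in> {..L}"
  have "degree (\<Prod>j\<in>{..L} - {i}. [:int j, 1:]) \<le> (\<Sum>j\<in>{..L} - {i}. 1)"
    using degree_prod_sum_le[of "{..L} - {i}" "\<lambda>j. [:int j, 1:]"] by (simp add: o_def)
  also have "\<dots> = L" using \<open>i \<in> {..L}\<close> by simp
  finally show "degree (smult (d i) (\<Prod>j\<in>{..L} - {i}. [:int j, 1:])) \<le> L"
    using degree_smult_le order_trans by blast
qed simp

lemma partial_fraction_numerator_nonzero_mod:
  fixes p :: int
  assumes "prime p" and "int L < p" and "i \<le> L" and "\<not> p dvd d i"
  shows "\<exists>k. \<not> p dvd coeff (partial_fraction_numerator L d) k"
proof (rule ccontr)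
  assume "\<nexists>k. \<not> p dvd coeff (partial_fraction_numerator L d) k"
  then have "p dvd poly (partial_fraction_numerator L d) (- int i)"
    unfolding poly_altdef by (intro dvd_sum) simp
  moreover have "poly (partial_fraction_numerator L d) (- int i) = d i * (\<Prod>j\<in>{..L} - {i}. int j - int i)"
    \<comment> \<open>all other terms contain the factor \<open>X + i\<close>\<close>
    unfolding poly_partial_fraction_numerator using assms(3)
    by (subst sum.remove[of _ i]) (auto intro!: sum.neutral prod_zero)
  moreover have "\<not> p dvd int j - int i" if "j \<in> {..L} - {i}" for j
    using that assms(2,3) dvd_imp_le_int[of "int j - int i" p] by auto
  ultimately show False
    using assms(1,4) by (auto simp: prime_dvd_mult_iff prime_dvd_prod_iff)
qed

lemma poly_partial_fraction_numerator_cong: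
  fixes p x :: int
  assumes "prime p" and "\<And>j. j \<le> L \<Longrightarrow> \<not> p dvd x + int j"
  shows "[poly (partial_fraction_numerator L d) x
           = (\<Prod>j\<le>L. x + int j) * (\<Sum>i\<le>L. d i * (x + int i) ^ nat (p - 2))] (mod p)"
proof -
  have "[(\<Prod>j\<in>{..L} - {i}. x + int j) = (\<Prod>j\<le>L. x + int j) * (x + int i) ^ nat (p - 2)] (mod p)"
    if "i \<le> L" for i
  proof -
    have "nat (p - 1) = Suc (nat (p - 2))" using prime_ge_2_int[OF assms(1)] by simp
    then have "(\<Prod>j\<le>L. x + int j) * (x + int i) ^ nat (p - 2)
        = (\<Prod>j\<in>{..L} - {i}. x + int j) * (x + int i) ^ nat (p - 1)"
      using that by (simp add: prod.remove[of "{..L}" i] algebra_simps)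
    also have "[\<dots> = (\<Prod>j\<in>{..L} - {i}. x + int j) * 1] (mod p)"
      using fermat_theorem_int[OF assms(1) assms(2)[OF that]] by (rule cong_scalar_left)
    finally show ?thesis by (simp add: cong_sym)
  qed
  then have "[(\<Sum>i\<le>L. d i * (\<Prod>j\<in>{..L} - {i}. x + int j))
      = (\<Sum>i\<le>L. d i * ((\<Prod>j\<le>L. x + int j) * (x + int i) ^ nat (p - 2)))] (mod p)"
    by (intro cong_sum cong_scalar_left) simp
  then show ?thesis
    unfolding poly_partial_fraction_numerator by (simp add: sum_distrib_left algebra_simps)
qed

lemma fermat_quotient_recurrence_root:
  fixes p x :: int
  assumes "prime p" and "\<And>j. j \<le> L \<Longrightarrow> \<not> p dvd x + int j"
    and "[(\<Sum>i\<le>L. d i * fermat_quotient p (x + int i)) = 0] (mod p)"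
    and "[(\<Sum>i\<le>L. d i * fermat_quotient p (x + int i + p)) = 0] (mod p)"
  shows "[poly (partial_fraction_numerator L d) x = 0] (mod p)"
proof -
  define A where "A = (\<Sum>i\<le>L. d i * fermat_quotient p (x + int i))"
  define B where "B = (\<Sum>i\<le>L. d i * (x + int i) ^ nat (p - 2))"
  have "[(\<Sum>i\<le>L. d i * fermat_quotient p (x + int i + p))
      = (\<Sum>i\<le>L. d i * (fermat_quotient p (x + int i) - (x + int i) ^ nat (p - 2)))] (mod p)"
    using fermat_quotient_add_prime[OF assms(1) assms(2)] by (intro cong_sum cong_scalar_left) simp
  also have "(\<Sum>i\<le>L. d i * (fermat_quotient p (x + int i) - (x + int i) ^ nat (p - 2))) = A - B"
    unfolding A_def B_def by (simp add: right_diff_distrib sum_subtractf)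
  finally have "[A - B = 0] (mod p)"
    using assms(4) by (rule cong_trans[OF cong_sym])
  moreover have "[A = 0] (mod p)" using assms(3) unfolding A_def .
  ultimately have "p dvd A - (A - B)" by (simp only: cong_0_iff dvd_diff)
  then have "[B = 0] (mod p)" by (simp add: cong_0_iff)
  then have "[(\<Prod>j\<le>L. x + int j) * B = (\<Prod>j\<le>L. x + int j) * 0] (mod p)"
    by (rule cong_scalar_left)
  with poly_partial_fraction_numerator_cong[where L = L and d = d, OF assms(1,2), folded B_def]
  show ?thesis by (simp add: cong_trans)
qed

lemma inj_on_mod_interval:
  fixes a m p :: int
  assumes "m \<le> p"
  shows "inj_on (\<lambda>x. x mod p) {a..<a + m}"
proof (rule inj_onI)
  fix x y assume "x \<in> {a..<a + m}" "y \<in> {a..<a + m}" "x mod p = y mod p"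
  then have "p dvd x - y" and "\<bar>x - y\<bar> < p"
    using assms by (auto simp: mod_eq_dvd_iff)
  then show "x = y" using dvd_imp_le_int[of "x - y" p] by fastforce
qed

lemma card_interval_mod_outside_le:
  fixes a m p :: int
  assumes "0 < p" and "m \<le> p"
  shows "card {x \<in> {a..<a + m}. \<not> (1 \<le> x mod p \<and> x mod p \<le> p - 1 - int L)} \<le> Suc L"
    (is "card ?B \<le> _")
proof -
  have "(\<lambda>x. x mod p) ` ?B \<subseteq> insert 0 {p - int L..p - 1}"
  proof (rule image_subsetI)
    fix x assume "x \<in> ?B"
    with pos_mod_sign[OF assms(1), of x] pos_mod_bound[OF assms(1), of x]
    show "x mod p \<in> insert 0 {p - int L..p - 1}" by auto
  qed
  have "card ?B = card ((\<lambda>x. x mod p) ` ?B)"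
    by (intro card_image[symmetric] inj_on_subset[OF inj_on_mod_interval[OF assms(2)], of _ a]) auto
  also have "\<dots> \<le> card (insert 0 {p - int L..p - 1})"
    using \<open>_ \<subseteq> _\<close> by (intro card_mono) simp_all
  also have "\<dots> \<le> Suc L" by (simp add: card_insert_if)
  finally show ?thesis .
qed

lemma sum_atMost_recurrence_coeffs:
  fixes c f :: "nat \<Rightarrow> 'a :: comm_ring_1"
  shows "(\<Sum>i\<le>L. (if i = L then 1 else - c i) * f i) = f L - (\<Sum>i<L. c i * f i)"
  by (simp add: lessThan_Suc_atMost[symmetric] sum_negf)

lemma not_dvd_add_if_mod_range:
  fixes x j p :: int
  assumes "1 \<le> x mod p" and "0 \<le> j" and "x mod p + j < p"
  shows "\<not> p dvd x + j"
proof -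
  have "(x + j) mod p = (x mod p + j) mod p" by (simp add: mod_add_left_eq)
  also have "\<dots> = x mod p + j" using assms by (intro mod_pos_pos_trivial) auto
  finally show ?thesis using assms by (simp add: dvd_eq_mod_eq_0)
qed

lemma fermat_quotient_lin_recurrence_window:
  fixes p M :: int and c :: "nat \<Rightarrow> int"
  assumes "prime p" and "int L < p"
    and recurrence: "\<And>u. u + L < N \<Longrightarrow>
      [fermat_quotient p (M + 1 + int (u + L))
         = (\<Sum>i<L. c i * fermat_quotient p (M + 1 + int (u + i)))] (mod p)"
  shows "min (int N - p - int L) p \<le> 2 * int L + 1"
proof -
  define m where "m = min (int N - p - int L) p"
  define W where "W = {M + 1..<M + 1 + m}"
  define G where "G = {x \<in> W. 1 \<le> x mod p \<and> x mod p \<le> p - 1 - int L}"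
  define d where "d = (\<lambda>i. if i = L then 1 else - c i)"
  have p_pos: "0 < p" using prime_gt_0_int[OF assms(1)] .
  have annihilates: "[(\<Sum>i\<le>L. d i * fermat_quotient p (M + 1 + int u + int i)) = 0] (mod p)"
    if "u + L < N" for u
    using recurrence[OF that] unfolding d_def sum_atMost_recurrence_coeffs
    by (simp add: cong_iff_dvd_diff cong_0_iff add.assoc)
  have roots: "p dvd poly (partial_fraction_numerator L d) x" if "x \<in> G" for x
  proof -
    define u where "u = nat (x - M - 1)"
    have x: "x = M + 1 + int u" and u: "int u + p + int L < int N"
      using that unfolding G_def W_def m_def u_def by auto
    have "\<not> p dvd x + int j" if "j \<le> L" for j
      using \<open>x \<in> G\<close> that unfolding G_def by (intro not_dvd_add_if_mod_range) auto
    moreover have "[(\<Sum>i\<le>L. d i * fermat_quotient p (x + int i)) = 0] (mod p)"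
      using annihilates[of u] u p_pos x by simp
    moreover have "[(\<Sum>i\<le>L. d i * fermat_quotient p (x + int i + p)) = 0] (mod p)"
      using annihilates[of "u + nat p"] u p_pos x by (simp add: ac_simps)
    ultimately show ?thesis
      using fermat_quotient_recurrence_root[OF assms(1)] by (simp add: cong_0_iff)
  qed
  have "G \<subseteq> W" and "finite W" unfolding G_def W_def by auto
  have "card G \<le> degree (partial_fraction_numerator L d)"
  proof (rule card_roots_mod_prime_le_degree[OF assms(1)])
    show "\<exists>k. \<not> p dvd coeff (partial_fraction_numerator L d) k"
      using partial_fraction_numerator_nonzero_mod[OF assms(1,2), of L d] assms(1)
      by (simp add: d_def prime_int_iff)
    show "finite G" using \<open>G \<subseteq> W\<close> \<open>finite W\<close> by (rule finite_subset)
    show "inj_on (\<lambda>x. x mod p) G"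
      using \<open>G \<subseteq> W\<close> inj_on_mod_interval[of m p "M + 1"] unfolding W_def m_def
      by (auto intro: inj_on_subset)
  qed (rule roots)
  then have "card G \<le> L"
    using degree_partial_fraction_numerator_le order_trans by blast
  moreover have "card (W - G) \<le> Suc L"
  proof -
    have "W - G = {x \<in> {M + 1..<M + 1 + m}. \<not> (1 \<le> x mod p \<and> x mod p \<le> p - 1 - int L)}"
      unfolding G_def W_def by auto
    then show ?thesis using card_interval_mod_outside_le[OF p_pos, of m "M + 1" L] by (simp add: m_def)
  qed
  moreover have "card W = card G + card (W - G)"
    using \<open>G \<subseteq> W\<close> \<open>finite W\<close> by (simp add: card_Diff_subset finite_subset card_mono)
  ultimately have "card W \<le> 2 * L + 1" by simp
  then show ?thesis unfolding W_def m_def by simp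
qed

theorem theorem14:
  fixes p M :: int and N :: nat
  assumes "prime p" and "1 \<le> N" and "int N < p ^ 2"
  shows "real (lin_compl_mod p N (\<lambda>i. fermat_quotient p (M + 1 + int i)))
           \<ge> min ((real_of_int p - 1) / 2) ((real N - real_of_int p - 1) / 3)"
proof -
  define s where "s = (\<lambda>i. fermat_quotient p (M + 1 + int i))"
  define L where "L = lin_compl_mod p N s"
  have "\<exists>c :: nat \<Rightarrow> int. \<forall>u. u + L < N \<longrightarrow> [s (u + L) = (\<Sum>i<L. c i * s (u + i))] (mod p)"
    \<comment> \<open>the \<open>LEAST\<close> is attained because \<open>L = N\<close> satisfies the condition vacuously\<close>
    unfolding L_def lin_compl_mod_def by (rule LeastI[of _ N]) simp
  then obtain c where recurrence:
    "\<And>u. u + L < N \<Longrightarrow> [s (u + L) = (\<Sum>i<L. c i * s (u + i))] (mod p)"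
    by blast
  have "p - 1 \<le> 2 * int L \<or> int N - p - 1 \<le> 3 * int L"
  proof (cases "int L < p")
    case True
    then show ?thesis
      using fermat_quotient_lin_recurrence_window[where N = N, OF assms(1) True recurrence[unfolded s_def]]
      by linarith
  qed simp
  then have "real_of_int (p - 1) \<le> real_of_int (2 * int L)
      \<or> real_of_int (int N - p - 1) \<le> real_of_int (3 * int L)"
    by (simp only: of_int_le_iff)
  then have "min ((real_of_int p - 1) / 2) ((real N - real_of_int p - 1) / 3) \<le> real L"
    by (auto simp: min_le_iff_disj)
  then show ?thesis unfolding L_def s_def by simp
qed

end
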